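(* The set $\mathcal{D}=\{G\in\mathcal{T}: (\mathbb{N},G) \text{ is divisible}\}$ is a dense $G_\delta$ subset of $\mathcal{T}$.
   Context: Let $\mathbb{N}^{\mathbb{N}\times\mathbb{N}}$ be the space of functions $\mathbb{N}\times\mathbb{N}\to\mathbb{N}$ with the product of discrete topologies. Let $\mathcal{A}=\{G\in\mathbb{N}^{\mathbb{N}\times\mathbb{N}}: G \text{ is an abelian group operation on } \mathbb{N} \text{ with identity element } 0\}$ and $\mathcal{T}=\{G\in\mathcal{A}: (\mathbb{N},G)\text{ is torsion-free}\}$, with the subspace topology. *)

theory Defs
  imports "HOL-Analysis.Analysis"
begin

type_synonym binop = "nat \<times> nat \<Rightarrow> nat"

definition NNN_top :: "binop topology" where
  "NNN_top = product_topology (\<lambda>_. discrete_topology (UNIV :: nat set)) UNIV"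

definition abgroup_op :: "binop \<Rightarrow> bool" where
  "abgroup_op G \<longleftrightarrow>
     (\<forall>x y z. G (G (x, y), z) = G (x, G (y, z))) \<and>
     (\<forall>x y. G (x, y) = G (y, x)) \<and>
     (\<forall>x. G (0, x) = x) \<and>
     (\<forall>x. \<exists>y. G (x, y) = 0)"

fun gmult :: "binop \<Rightarrow> nat \<Rightarrow> nat \<Rightarrow> nat" where
  "gmult G 0 x = 0"
| "gmult G (Suc n) x = G (x, gmult G n x)"

definition torsion_free :: "binop \<Rightarrow> bool" where
  "torsion_free G \<longleftrightarrow> (\<forall>x n. x \<noteq> 0 \<and> n \<ge> 1 \<longrightarrow> gmult G n x \<noteq> 0)"

definition divisible :: "binop \<Rightarrow> bool" where
  "divisible G \<longleftrightarrow> (\<forall>x n. n \<ge> 1 \<longrightarrow> (\<exists>y. gmult G n y = x))"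

definition AbOps :: "binop set" where
  "AbOps = {G. abgroup_op G}"

definition TFOps :: "binop set" where
  "TFOps = {G \<in> AbOps. torsion_free G}"

definition DivOps :: "binop set" where
  "DivOps = {G \<in> TFOps. divisible G}"

end

theory Submission
  imports Defs
begin

text \<open>A basic open set of the product topology fixes finitely many values. For n \<ge> 1 and x, the
set of operations in which x is divisible by n is therefore open, since a witness y with n y = x
only involves the values G (y, k y) for k < n; intersecting over all x, n exhibits the divisible
operations as a G\<delta>. For density, a torsion-free group embeds into its divisible hull, a countably
infinite torsion-free divisible group. Given finitely many values of G, choose a bijection between
N and the hull that agrees with the embedding on the finitely many numbers involved, and transport
the hull's operation to N; the result is divisible, torsion-free and agrees with G on the prescribed
values.\<close>

lemma openin_NNN_top_iff:
  "openin NNN_top S \<longleftrightarrow> (\<forall>G\<in>S. \<exists>K. finite K \<and> (\<forall>G'. (\<forall>i\<in>K. G' i = G i) \<longrightarrow> G' \<in> S))"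
proof
  assume "openin NNN_top S"
  show "\<forall>G\<in>S. \<exists>K. finite K \<and> (\<forall>G'. (\<forall>i\<in>K. G' i = G i) \<longrightarrow> G' \<in> S)"
  proof
    fix G assume "G \<in> S"
    then obtain U where U: "finite {i. U i \<noteq> UNIV}" "G \<in> Pi\<^sub>E UNIV U" "Pi\<^sub>E UNIV U \<subseteq> S"
      using \<open>openin NNN_top S\<close> unfolding NNN_top_def openin_product_topology_alt by auto
    have "G' \<in> S" if "\<forall>i\<in>{i. U i \<noteq> UNIV}. G' i = G i" for G'
    proof -
      have "G i \<in> U i" for i
        using U(2) by (simp add: PiE_iff del: split_paired_All)
      then have "G' i \<in> U i" for i
        using that by (metis UNIV_I mem_Collect_eq)
      then show ?thesis using U(3) by (auto simp: PiE_iff)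
    qed
    with U(1) show "\<exists>K. finite K \<and> (\<forall>G'. (\<forall>i\<in>K. G' i = G i) \<longrightarrow> G' \<in> S)" by blast
  qed
next
  assume nbhd: "\<forall>G\<in>S. \<exists>K. finite K \<and> (\<forall>G'. (\<forall>i\<in>K. G' i = G i) \<longrightarrow> G' \<in> S)"
  show "openin NNN_top S"
    unfolding NNN_top_def openin_product_topology_alt
  proof (intro ballI)
    fix G assume "G \<in> S"
    then obtain K where K: "finite K" "\<And>G'. \<forall>i\<in>K. G' i = G i \<Longrightarrow> G' \<in> S"
      using nbhd by blast
    define U where "U i = (if i \<in> K then {G i} else UNIV)" for i
    have "finite {i. U i \<noteq> UNIV}" using K(1) by (auto simp: U_def intro: finite_subset)
    moreover have "G \<in> Pi\<^sub>E UNIV U" by (auto simp: U_def PiE_iff)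
    moreover have "Pi\<^sub>E UNIV U \<subseteq> S"
    proof
      fix G' assume "G' \<in> Pi\<^sub>E UNIV U"
      then have "\<forall>i\<in>K. G' i = G i" by (auto simp: U_def PiE_iff split: if_splits)
      then show "G' \<in> S" using K(2) by blast
    qed
    ultimately show "\<exists>U. finite {i \<in> UNIV. U i \<noteq> topspace (discrete_topology UNIV)} \<and>
        (\<forall>i\<in>UNIV. openin (discrete_topology UNIV) (U i)) \<and> G \<in> Pi\<^sub>E UNIV U \<and> Pi\<^sub>E UNIV U \<subseteq> S"
      by auto
  qed
qed

lemma topspace_NNN_top [simp]: "topspace NNN_top = UNIV"
  by (simp add: NNN_top_def)

lemma gmult_eq_if_agree:
  assumes "\<forall>k<n. G' (y, gmult G k y) = G (y, gmult G k y)"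
  shows "gmult G' n y = gmult G n y"
  using assms by (induction n) auto

lemma openin_divisible_by:
  "openin NNN_top {G. \<exists>y. gmult G n y = x}"
  unfolding openin_NNN_top_iff
proof
  fix G assume "G \<in> {G. \<exists>y. gmult G n y = x}"
  then obtain y where y: "gmult G n y = x" by blast
  have "G' \<in> {G. \<exists>y. gmult G n y = x}"
    if "\<forall>i\<in>(\<lambda>k. (y, gmult G k y)) ` {..<n}. G' i = G i" for G'
    using that gmult_eq_if_agree[of n G' y G] y by auto
  then show "\<exists>K. finite K \<and> (\<forall>G'. (\<forall>i\<in>K. G' i = G i) \<longrightarrow> G' \<in> {G. \<exists>y. gmult G n y = x})"
    by blast
qed

lemma DivOps_eq_INT:
  "DivOps = (\<Inter>(x, n). TFOps \<inter> {G. \<exists>y. gmult G (Suc n) y = x})"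
proof -
  have "divisible G \<longleftrightarrow> (\<forall>x n. \<exists>y. gmult G (Suc n) y = x)" for G
    unfolding divisible_def by (metis One_nat_def Suc_le_D le_add1 plus_1_eq_Suc)
  then show ?thesis unfolding DivOps_def by auto
qed

lemma gdelta_in_DivOps: "gdelta_in (subtopology NNN_top TFOps) DivOps"
  unfolding DivOps_eq_INT
proof (rule gdelta_in_Inter)
  fix S assume "S \<in> range (\<lambda>(x, n). TFOps \<inter> {G. \<exists>y. gmult G (Suc n) y = x})"
  then obtain x n where "S = TFOps \<inter> {G. \<exists>y. gmult G (Suc n) y = x}" by auto
  then have "openin (subtopology NNN_top TFOps) S"
    unfolding openin_subtopology using openin_divisible_by by blast
  then show "gdelta_in (subtopology NNN_top TFOps) S" by (rule open_imp_gdelta_in)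
qed auto

lemma closure_of_subtopology_NNN_top_eq_topspace:
  assumes "D \<subseteq> T" and "\<And>G K. G \<in> T \<Longrightarrow> finite K \<Longrightarrow> \<exists>G'\<in>D. \<forall>i\<in>K. G' i = G i"
  shows "subtopology NNN_top T closure_of D = topspace (subtopology NNN_top T)"
proof (rule subset_antisym[OF closure_of_subset_topspace subsetI])
  fix G assume "G \<in> topspace (subtopology NNN_top T)"
  then have "G \<in> T" by simp
  show "G \<in> subtopology NNN_top T closure_of D"
    unfolding in_closure_of
  proof (intro conjI allI impI)
    fix U assume U: "G \<in> U \<and> openin (subtopology NNN_top T) U"
    then obtain V where V: "openin NNN_top V" "U = T \<inter> V" by (auto simp: openin_subtopology)
    then obtain K where "finite K" and K: "\<And>G'. \<forall>i\<in>K. G' i = G i \<Longrightarrow> G' \<in> V"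
      using U unfolding openin_NNN_top_iff by blast
    show "\<exists>G'. G' \<in> D \<and> G' \<in> U"
      using assms(1) assms(2)[OF \<open>G \<in> T\<close> \<open>finite K\<close>] K V(2) by blast
  qed (use \<open>G \<in> T\<close> in simp)
qed

lemma bij_betw_extending_inj_on:
  assumes "countable A" "infinite A" "countable B" "infinite B"
    and "finite S" "S \<subseteq> A" "inj_on e S" "e ` S \<subseteq> B"
  obtains f where "bij_betw f A B" "\<And>x. x \<in> S \<Longrightarrow> f x = e x"
proof -
  have "countable (A - S)" "infinite (A - S)" "countable (B - e ` S)" "infinite (B - e ` S)"
    using assms by (auto simp: Diff_infinite_finite)
  then have "bij_betw (from_nat_into (B - e ` S) \<circ> to_nat_on (A - S)) (A - S) (B - e ` S)"
    using bij_betw_trans[OF to_nat_on_infinite bij_betw_from_nat_into] by blast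
  then obtain h where h: "bij_betw h (A - S) (B - e ` S)" ..
  define f where "f x = (if x \<in> S then e x else h x)" for x
  have "bij_betw f S (e ` S)"
    using assms(7) by (auto simp: f_def intro: bij_betw_cong[THEN iffD2, OF _ inj_on_imp_bij_betw])
  moreover have "bij_betw f (A - S) (B - e ` S)"
    using h by (auto simp: f_def intro: bij_betw_cong[THEN iffD2, OF _ h])
  ultimately have "bij_betw f (S \<union> (A - S)) (e ` S \<union> (B - e ` S))"
    by (rule bij_betw_combine) blast
  moreover have "S \<union> (A - S) = A" "e ` S \<union> (B - e ` S) = B" using assms(6,8) by auto
  ultimately show ?thesis using that by (simp add: f_def)
qed

locale abgroup =
  fixes G :: binop
  assumes abgroup_op: "abgroup_op G"
begin

lemma assoc: "G (G (x, y), z) = G (x, G (y, z))"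
  using abgroup_op unfolding abgroup_op_def by blast

lemma commute: "G (x, y) = G (y, x)"
  using abgroup_op unfolding abgroup_op_def by blast

lemma left_commute: "G (x, G (y, z)) = G (y, G (x, z))"
  by (metis assoc commute)

lemmas ac = assoc commute left_commute

lemma left_neutral [simp]: "G (0, x) = x"
  using abgroup_op unfolding abgroup_op_def by blast

lemma right_neutral [simp]: "G (x, 0) = x"
  using left_neutral commute by metis

lemma right_inverse: "\<exists>y. G (x, y) = 0"
  using abgroup_op unfolding abgroup_op_def by blast

lemma right_cancel: "G (x, z) = G (y, z) \<Longrightarrow> x = y"
  by (metis assoc right_inverse right_neutral)

lemma gmult_zero_right [simp]: "gmult G n 0 = 0"
  by (induction n) auto

lemma gmult_add: "gmult G (m + n) x = G (gmult G m x, gmult G n x)"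
  by (induction m) (auto simp: ac)

lemma gmult_distrib: "gmult G n (G (x, y)) = G (gmult G n x, gmult G n y)"
  by (induction n) (auto simp: ac)

lemma gmult_gmult: "gmult G m (gmult G n x) = gmult G (m * n) x"
  by (induction m) (auto simp: gmult_add)

lemma gmult_commute: "gmult G m (gmult G n x) = gmult G n (gmult G m x)"
  by (simp add: gmult_gmult mult.commute)

end

locale tf_abgroup = abgroup +
  assumes torsion_free: "torsion_free G"
begin

lemma gmult_cancel:
  assumes "n \<ge> 1" "gmult G n x = gmult G n y"
  shows "x = y"
proof -
  obtain w where w: "G (y, w) = 0" using right_inverse by blast
  have "gmult G n (G (x, w)) = gmult G n (G (y, w))" using assms(2) by (simp add: gmult_distrib)
  then have "gmult G n (G (x, w)) = 0" by (simp add: w)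
  then have "G (x, w) = 0" using torsion_free assms(1) unfolding torsion_free_def by blast
  with w show ?thesis by (metis right_cancel)
qed

text \<open>The divisible hull: a pair (g, n) with n \<ge> 1 stands for the fraction g/n.\<close>

definition fracs :: "(nat \<times> nat) set" where
  "fracs = {p. snd p \<ge> 1}"

definition frac_rel :: "((nat \<times> nat) \<times> (nat \<times> nat)) set" where
  "frac_rel = {((g, n), (h, m)). n \<ge> 1 \<and> m \<ge> 1 \<and> gmult G m g = gmult G n h}"

lemma mem_fracs [simp]: "(g, n) \<in> fracs \<longleftrightarrow> n \<ge> 1"
  by (simp add: fracs_def)

lemma mem_frac_rel [simp]:
  "((g, n), (h, m)) \<in> frac_rel \<longleftrightarrow> n \<ge> 1 \<and> m \<ge> 1 \<and> gmult G m g = gmult G n h"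
  by (simp add: frac_rel_def)

lemma equiv_frac_rel: "equiv fracs frac_rel"
proof (rule equivI)
  show "refl_on fracs frac_rel" "frac_rel \<subseteq> fracs \<times> fracs" "sym frac_rel"
    unfolding refl_on_def sym_def fracs_def frac_rel_def by auto
  show "trans frac_rel"
  proof (rule transI, clarify)
    fix g n h m l k
    assume "((g, n), (h, m)) \<in> frac_rel" "((h, m), (l, k)) \<in> frac_rel"
    then have "m \<ge> 1" "n \<ge> 1" "k \<ge> 1"
      and gh: "gmult G m g = gmult G n h" and hl: "gmult G k h = gmult G m l" by auto
    have "gmult G m (gmult G k g) = gmult G k (gmult G n h)" by (metis gh gmult_commute)
    also have "\<dots> = gmult G m (gmult G n l)" by (metis hl gmult_commute)
    finally have "gmult G k g = gmult G n l" by (rule gmult_cancel[OF \<open>m \<ge> 1\<close>])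
    then show "((g, n), (l, k)) \<in> frac_rel" using \<open>n \<ge> 1\<close> \<open>k \<ge> 1\<close> by simp
  qed
qed

fun frac_add :: "nat \<times> nat \<Rightarrow> nat \<times> nat \<Rightarrow> nat \<times> nat" where
  "frac_add (g, n) (h, m) = (G (gmult G m g, gmult G n h), n * m)"

lemma frac_add_respects:
  assumes "(p, p') \<in> frac_rel" "(q, q') \<in> frac_rel"
  shows "(frac_add p q, frac_add p' q') \<in> frac_rel"
proof -
  obtain g n g' n' h m h' m' where pq: "p = (g, n)" "p' = (g', n')" "q = (h, m)" "q' = (h', m')"
    by (cases p, cases p', cases q, cases q')
  with assms have "n \<ge> 1" "n' \<ge> 1" "m \<ge> 1" "m' \<ge> 1"
    and p: "gmult G n' g = gmult G n g'" and q: "gmult G m' h = gmult G m h'" by auto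
  have "gmult G (n' * m') (G (gmult G m g, gmult G n h))
      = G (gmult G (m' * m) (gmult G n' g), gmult G (n' * n) (gmult G m' h))"
    by (simp add: gmult_distrib gmult_gmult ac_simps)
  also have "\<dots> = G (gmult G (m' * m) (gmult G n g'), gmult G (n' * n) (gmult G m h'))"
    by (simp add: p q)
  also have "\<dots> = gmult G (n * m) (G (gmult G m' g', gmult G n' h'))"
    by (simp add: gmult_distrib gmult_gmult ac_simps)
  finally show ?thesis using pq \<open>n \<ge> 1\<close> \<open>n' \<ge> 1\<close> \<open>m \<ge> 1\<close> \<open>m' \<ge> 1\<close> by simp
qed

definition frac_class :: "nat \<times> nat \<Rightarrow> (nat \<times> nat) set" where
  "frac_class p = frac_rel `` {p}"

definition div_hull :: "(nat \<times> nat) set set" where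
  "div_hull = fracs // frac_rel"

definition hull_add :: "(nat \<times> nat) set \<Rightarrow> (nat \<times> nat) set \<Rightarrow> (nat \<times> nat) set" where
  "hull_add X Y = (\<Union>p\<in>X. \<Union>q\<in>Y. frac_class (frac_add p q))"

definition hull_emb :: "nat \<Rightarrow> (nat \<times> nat) set" where
  "hull_emb g = frac_class (g, 1)"

fun hull_mult :: "nat \<Rightarrow> (nat \<times> nat) set \<Rightarrow> (nat \<times> nat) set" where
  "hull_mult 0 X = hull_emb 0"
| "hull_mult (Suc k) X = hull_add X (hull_mult k X)"

lemma frac_class_eq_iff:
  "n \<ge> 1 \<Longrightarrow> m \<ge> 1 \<Longrightarrow> frac_class (g, n) = frac_class (h, m) \<longleftrightarrow> gmult G m g = gmult G n h"
  unfolding frac_class_def by (simp add: eq_equiv_class_iff[OF equiv_frac_rel])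

lemma frac_class_in_div_hull: "n \<ge> 1 \<Longrightarrow> frac_class (g, n) \<in> div_hull"
  unfolding frac_class_def div_hull_def by (simp add: quotientI)

lemma hullE:
  assumes "X \<in> div_hull"
  obtains g n where "n \<ge> 1" "X = frac_class (g, n)"
  using assms unfolding div_hull_def frac_class_def fracs_def by (auto elim!: quotientE)

lemma hull_add_frac_class [simp]:
  assumes "n \<ge> 1" "m \<ge> 1"
  shows "hull_add (frac_class (g, n)) (frac_class (h, m)) = frac_class (G (gmult G m g, gmult G n h), n * m)"
proof -
  have "congruent2 frac_rel frac_rel (\<lambda>p q. frac_class (frac_add p q))"
    unfolding frac_class_def
    by (intro congruent2I' equiv_class_eq[OF equiv_frac_rel] frac_add_respects)
  then show ?thesis
    using assms unfolding hull_add_def frac_class_def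
    by (simp add: UN_equiv_class2[OF equiv_frac_rel equiv_frac_rel])
qed

lemma hull_add_closed: "X \<in> div_hull \<Longrightarrow> Y \<in> div_hull \<Longrightarrow> hull_add X Y \<in> div_hull"
  by (elim hullE) (simp add: frac_class_in_div_hull)

lemma hull_add_assoc:
  "X \<in> div_hull \<Longrightarrow> Y \<in> div_hull \<Longrightarrow> Z \<in> div_hull \<Longrightarrow> hull_add (hull_add X Y) Z = hull_add X (hull_add Y Z)"
  by (elim hullE) (simp add: gmult_distrib gmult_gmult ac_simps assoc)

lemma hull_add_commute: "X \<in> div_hull \<Longrightarrow> Y \<in> div_hull \<Longrightarrow> hull_add X Y = hull_add Y X"
  by (elim hullE) (simp add: ac_simps commute)

lemma hull_add_emb_zero: "X \<in> div_hull \<Longrightarrow> hull_add (hull_emb 0) X = X"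
  by (elim hullE) (simp add: hull_emb_def)

lemma hull_add_inverse: "X \<in> div_hull \<Longrightarrow> \<exists>Y\<in>div_hull. hull_add X Y = hull_emb 0"
proof (elim hullE)
  fix g n assume "n \<ge> 1" "X = frac_class (g, n)"
  moreover obtain w where "G (g, w) = 0" using right_inverse by blast
  ultimately have "hull_add X (frac_class (w, n)) = hull_emb 0"
    by (simp add: hull_emb_def frac_class_eq_iff gmult_distrib[symmetric])
  then show ?thesis using \<open>n \<ge> 1\<close> frac_class_in_div_hull by blast
qed

lemma hull_mult_frac_class: "n \<ge> 1 \<Longrightarrow> hull_mult k (frac_class (g, n)) = frac_class (gmult G k g, n)"
  by (induction k) (simp_all add: hull_emb_def frac_class_eq_iff gmult_distrib gmult_gmult ac_simps)

lemma hull_mult_closed: "X \<in> div_hull \<Longrightarrow> hull_mult k X \<in> div_hull"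
  by (induction k) (simp_all add: hull_emb_def frac_class_in_div_hull hull_add_closed)

lemma hull_torsion_free: "X \<in> div_hull \<Longrightarrow> k \<ge> 1 \<Longrightarrow> hull_mult k X = hull_emb 0 \<Longrightarrow> X = hull_emb 0"
proof (elim hullE)
  fix g n assume "k \<ge> 1" "n \<ge> 1" "X = frac_class (g, n)" "hull_mult k X = hull_emb 0"
  then have "gmult G k g = 0" by (simp add: hull_mult_frac_class hull_emb_def frac_class_eq_iff)
  with \<open>k \<ge> 1\<close> torsion_free have "g = 0" unfolding torsion_free_def by blast
  with \<open>n \<ge> 1\<close> \<open>X = frac_class (g, n)\<close> show "X = hull_emb 0"
    by (simp add: hull_emb_def frac_class_eq_iff)
qed

lemma hull_divisible: "X \<in> div_hull \<Longrightarrow> k \<ge> 1 \<Longrightarrow> \<exists>Y\<in>div_hull. hull_mult k Y = X"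
proof (elim hullE)
  fix g n assume "k \<ge> 1" "n \<ge> 1" "X = frac_class (g, n)"
  moreover have "n * k \<ge> 1" using \<open>k \<ge> 1\<close> \<open>n \<ge> 1\<close> by simp
  moreover have "gmult G n (gmult G k g) = gmult G (n * k) g" by (rule gmult_gmult)
  ultimately have "hull_mult k (frac_class (g, n * k)) = X"
    by (simp add: hull_mult_frac_class frac_class_eq_iff)
  with \<open>n * k \<ge> 1\<close> show ?thesis by (metis frac_class_in_div_hull)
qed

lemma hull_emb_in_div_hull: "hull_emb g \<in> div_hull"
  by (simp add: hull_emb_def frac_class_in_div_hull)

lemma inj_hull_emb: "inj hull_emb"
  by (simp add: inj_def hull_emb_def frac_class_eq_iff)

lemma hull_add_emb: "hull_add (hull_emb a) (hull_emb b) = hull_emb (G (a, b))"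
  by (simp add: hull_emb_def)

lemma countable_div_hull: "countable div_hull"
proof -
  have "div_hull \<subseteq> range frac_class" by (auto elim: hullE)
  then show ?thesis by (rule countable_subset) simp
qed

lemma infinite_div_hull: "infinite div_hull"
proof
  assume "finite div_hull"
  then have "finite (range hull_emb)" by (rule finite_subset[rotated]) (auto intro: hull_emb_in_div_hull)
  then show False using inj_hull_emb finite_imageD by blast
qed

definition hull_transfer :: "(nat \<Rightarrow> (nat \<times> nat) set) \<Rightarrow> binop" where
  "hull_transfer f = (\<lambda>(a, b). inv_into UNIV f (hull_add (f a) (f b)))"

lemma hull_transfer_apply: "hull_transfer f (a, b) = inv_into UNIV f (hull_add (f a) (f b))"
  by (simp add: hull_transfer_def)

context
  fixes f :: "nat \<Rightarrow> (nat \<times> nat) set"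
  assumes f_bij: "bij_betw f UNIV div_hull" and f_zero: "f 0 = hull_emb 0"
begin

lemma f_in_div_hull: "f x \<in> div_hull"
  using f_bij by (auto simp: bij_betw_def)

lemma f_inv_into: "X \<in> div_hull \<Longrightarrow> f (inv_into UNIV f X) = X"
  using f_bij by (simp add: bij_betw_def f_inv_into_f)

lemma inv_into_f: "inv_into UNIV f (f x) = x"
  using f_bij by (simp add: bij_betw_def)

lemma inv_into_hull_emb_zero: "inv_into UNIV f (hull_emb 0) = 0"
  by (metis f_zero inv_into_f)

lemma abgroup_op_hull_transfer: "abgroup_op (hull_transfer f)"
  unfolding abgroup_op_def hull_transfer_apply
proof (intro conjI allI)
  fix x y z
  show "inv_into UNIV f (hull_add (f (inv_into UNIV f (hull_add (f x) (f y)))) (f z)) =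
        inv_into UNIV f (hull_add (f x) (f (inv_into UNIV f (hull_add (f y) (f z)))))"
    by (simp add: f_inv_into f_in_div_hull hull_add_closed hull_add_assoc)
  show "inv_into UNIV f (hull_add (f x) (f y)) = inv_into UNIV f (hull_add (f y) (f x))"
    by (simp add: hull_add_commute f_in_div_hull)
  show "inv_into UNIV f (hull_add (f 0) (f x)) = x"
    by (simp add: f_zero hull_add_emb_zero f_in_div_hull inv_into_f)
  obtain Y where "Y \<in> div_hull" "hull_add (f x) Y = hull_emb 0"
    using hull_add_inverse f_in_div_hull by blast
  then show "\<exists>y. inv_into UNIV f (hull_add (f x) (f y)) = 0"
    by (metis f_inv_into f_zero inv_into_f)
qed

lemma gmult_hull_transfer: "gmult (hull_transfer f) n x = inv_into UNIV f (hull_mult n (f x))"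
  by (induction n)
    (simp_all add: hull_transfer_apply f_inv_into inv_into_hull_emb_zero hull_mult_closed f_in_div_hull)

lemma hull_transfer_in_DivOps: "hull_transfer f \<in> DivOps"
proof -
  have "torsion_free (hull_transfer f)"
    unfolding torsion_free_def gmult_hull_transfer
    by (metis f_inv_into f_zero hull_mult_closed hull_torsion_free f_in_div_hull inv_into_f)
  moreover have "divisible (hull_transfer f)"
    unfolding divisible_def gmult_hull_transfer
    by (metis f_in_div_hull f_inv_into hull_divisible inv_into_f)
  ultimately show ?thesis
    using abgroup_op_hull_transfer by (simp add: DivOps_def TFOps_def AbOps_def)
qed

end

lemma exists_DivOps_agreeing_on:
  assumes "finite K"
  shows "\<exists>G'\<in>DivOps. \<forall>i\<in>K. G' i = G i"
proof -
  define S where "S = insert 0 (fst ` K \<union> snd ` K \<union> G ` K)"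
  have "finite S" using assms by (simp add: S_def)
  moreover have "inj_on hull_emb S" using inj_hull_emb by (rule inj_on_subset) simp
  moreover have "hull_emb ` S \<subseteq> div_hull" using hull_emb_in_div_hull by blast
  ultimately obtain f
    where f_bij: "bij_betw f UNIV div_hull" and f_emb: "\<And>x. x \<in> S \<Longrightarrow> f x = hull_emb x"
    using bij_betw_extending_inj_on[of UNIV div_hull S hull_emb] countable_div_hull infinite_div_hull
    by auto
  have "hull_transfer f i = G i" if "i \<in> K" for i
  proof -
    obtain a b where "i = (a, b)" by fastforce
    then have "a \<in> S" "b \<in> S" "G (a, b) \<in> S" using that unfolding S_def by force+
    then have "hull_transfer f (a, b) = inv_into UNIV f (f (G (a, b)))"
      by (simp add: hull_transfer_apply f_emb hull_add_emb)
    also have "\<dots> = G (a, b)" using f_bij by (simp add: bij_betw_def)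
    finally show ?thesis using \<open>i = (a, b)\<close> by simp
  qed
  moreover have "hull_transfer f \<in> DivOps"
    using f_bij f_emb[of 0] by (intro hull_transfer_in_DivOps) (auto simp: S_def)
  ultimately show ?thesis by blast
qed

end

theorem lemma4p3:
  shows "gdelta_in (subtopology NNN_top TFOps) DivOps \<and>
         (subtopology NNN_top TFOps) closure_of DivOps = topspace (subtopology NNN_top TFOps)"
proof
  show "gdelta_in (subtopology NNN_top TFOps) DivOps" by (rule gdelta_in_DivOps)
  show "subtopology NNN_top TFOps closure_of DivOps = topspace (subtopology NNN_top TFOps)"
  proof (rule closure_of_subtopology_NNN_top_eq_topspace)
    show "DivOps \<subseteq> TFOps" by (auto simp: DivOps_def)
    fix G and K :: "(nat \<times> nat) set"
    assume "G \<in> TFOps" "finite K"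
    then interpret tf_abgroup G
      by unfold_locales (auto simp: TFOps_def AbOps_def)
    show "\<exists>G'\<in>DivOps. \<forall>i\<in>K. G' i = G i" using \<open>finite K\<close> by (rule exists_DivOps_agreeing_on)
  qed
qed

end
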